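(* Let $d\in\mathbb{N}$, $d\geq 2$, and for $\theta\in \mathbb{R}$ let $R_{\theta}\colon \mathbb{R}^{d}\to\mathbb{R}^{d}$ be the linear map $R_\theta(x_1,\dots,x_d)=(x_1\cos\theta-x_2\sin\theta,\ x_1\sin\theta+x_2\cos\theta,\ x_3,\dots,x_d)$. (i) For all $\theta_{1},\theta_{2}\in\mathbb{R}$ and $y\in\mathbb{R}^{d}$, $\|R_{\theta_{2}}(y)-R_{\theta_{1}}(y)\|\leq |\theta_{2}-\theta_{1}|\,\|y\|$. (ii) Let $t_{0}>0$ and let $\psi\colon [0,\infty)\to \mathbb{R}$ be a Lipschitz mapping with $\psi(t)=0$ for all $t\geq t_{0}$. Define $\Phi\colon\mathbb{R}^{d}\to\mathbb{R}^{d}$ by $\Phi(x)=R_{\psi(\|x\|)}(x)$. Then $\Phi$ is $(\operatorname{Lip}(\psi)t_{0}+1)$-bilipschitz and $\Phi(x)=x$ for all $x\in \mathbb{R}^{d}\setminus B(0,t_{0})$.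
   Context: $\|\cdot\|$ is the Euclidean norm, $B(0,t_0)$ the open Euclidean ball. $\operatorname{Lip}(\psi)$ is the smallest Lipschitz constant of $\psi$. A mapping is $L$-bilipschitz if it is injective and both it and its inverse are $L$-Lipschitz. *)

theory Defs
  imports "HOL-Analysis.Analysis"
begin

text \<open>R^d is modelled as real^'n with a finite linearly ordered index type 'n;
  the coordinates x_1, x_2 are the components at the two smallest indices.\<close>

definition idx1 :: "'n::{finite,linorder}" where
  "idx1 = Min (UNIV :: 'n set)"

definition idx2 :: "'n::{finite,linorder}" where
  "idx2 = Min (UNIV - {idx1 :: 'n})"

definition rot :: "real \<Rightarrow> (real,'n::{finite,linorder}) vec \<Rightarrow> (real,'n) vec" where
  "rot \<theta> x = (\<chi> i. if i = idx1 then x $ idx1 * cos \<theta> - x $ idx2 * sin \<theta>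
                   else if i = idx2 then x $ idx1 * sin \<theta> + x $ idx2 * cos \<theta>
                   else x $ i)"

definition Lip :: "'a::metric_space set \<Rightarrow> ('a \<Rightarrow> 'b::metric_space) \<Rightarrow> real" where
  "Lip S f = Inf {C. C-lipschitz_on S f}"

definition bilipschitz :: "real \<Rightarrow> ('a::metric_space \<Rightarrow> 'b::metric_space) \<Rightarrow> bool" where
  "bilipschitz L f \<longleftrightarrow> inj f \<and> L-lipschitz_on UNIV f \<and> L-lipschitz_on (range f) (inv f)"

end

theory Submission
  imports Defs
begin

text \<open>A rotation by \<theta> in the (x_1, x_2)-plane is a linear isometry, and the chord between
  angles \<theta>_1 and \<theta>_2 on the unit circle is at most the arc |\<theta>_2 - \<theta>_1|; this gives (i).
  For (ii), split \<Phi> x - \<Phi> y = R_a(x - y) + (R_a y - R_b y) with a = \<psi>|x|, b = \<psi>|y| and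
  |y| \<le> |x|: the first term has norm |x - y|, and the second vanishes unless |y| < t_0,
  in which case (i) bounds it by Lip(\<psi>) |x - y| t_0. Since R_\<theta> preserves norms, the
  inverse of \<Phi> is the same construction with -\<psi>, which has the same Lipschitz constant.\<close>

lemma idx1_neq_idx2:
  assumes "CARD('n::{finite,linorder}) \<ge> 2"
  shows "(idx1::'n) \<noteq> idx2"
proof -
  have "UNIV - {idx1::'n} \<noteq> {}"
  proof
    assume "UNIV - {idx1::'n} = {}"
    then have "CARD('n) = card {idx1::'n}" by (metis Diff_eq_empty_iff subset_singletonD
        UNIV_not_empty)
    then show False using assms by simp
  qed
  then have "(idx2::'n) \<in> UNIV - {idx1}" unfolding idx2_def by (intro Min_in) auto
  then show ?thesis by auto
qed

lemma power2_norm_vec_split: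
  fixes x :: "(real,'n::finite) vec"
  assumes "a \<noteq> b"
  shows "norm x ^ 2 = (x $ a)\<^sup>2 + (x $ b)\<^sup>2 + (\<Sum>i\<in>UNIV - {a,b}. (x $ i)\<^sup>2)"
proof -
  have "norm x ^ 2 = (\<Sum>i\<in>UNIV. (x $ i)\<^sup>2)"
    unfolding norm_vec_def L2_set_def by (simp add: sum_nonneg)
  also have "\<dots> = (x $ a)\<^sup>2 + (\<Sum>i\<in>UNIV - {a}. (x $ i)\<^sup>2)"
    by (simp add: sum.remove)
  also have "(\<Sum>i\<in>UNIV - {a}. (x $ i)\<^sup>2) = (x $ b)\<^sup>2 + (\<Sum>i\<in>UNIV - {a} - {b}. (x $ i)\<^sup>2)"
    using assms by (intro sum.remove) auto
  finally show ?thesis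
    by (simp add: Diff_insert2[symmetric] insert_commute)
qed

lemma rot_nth:
  fixes x :: "(real,'n::{finite,linorder}) vec"
  assumes "CARD('n) \<ge> 2"
  shows "rot \<theta> x $ idx1 = x $ idx1 * cos \<theta> - x $ idx2 * sin \<theta>"
    and "rot \<theta> x $ idx2 = x $ idx1 * sin \<theta> + x $ idx2 * cos \<theta>"
    and "i \<noteq> idx1 \<Longrightarrow> i \<noteq> idx2 \<Longrightarrow> rot \<theta> x $ i = x $ i"
  using idx1_neq_idx2[OF assms] by (auto simp: rot_def)

lemma rot_0 [simp]: "rot 0 x = x"
  by (simp add: vec_eq_iff rot_def)

lemma rot_diff: "rot \<theta> x - rot \<theta> y = rot \<theta> (x - y)"
  by (simp add: vec_eq_iff rot_def algebra_simps)

lemma rot_rot: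
  fixes x :: "(real,'n::{finite,linorder}) vec"
  assumes "CARD('n) \<ge> 2"
  shows "rot \<alpha> (rot \<beta> x) = rot (\<alpha> + \<beta>) x"
proof -
  have "rot \<alpha> (rot \<beta> x) $ i = rot (\<alpha> + \<beta>) x $ i" for i
  proof -
    consider "i = idx1" | "i = idx2" | "i \<noteq> idx1" "i \<noteq> idx2" by blast
    then show ?thesis
    proof cases
      case 1
      have "rot \<alpha> (rot \<beta> x) $ idx1 = rot (\<alpha> + \<beta>) x $ idx1"
        by (simp add: rot_nth[OF assms] cos_add sin_add algebra_simps)
      with 1 show ?thesis by simp
    next
      case 2
      have "rot \<alpha> (rot \<beta> x) $ idx2 = rot (\<alpha> + \<beta>) x $ idx2"
        by (simp add: rot_nth[OF assms] cos_add sin_add algebra_simps)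
      with 2 show ?thesis by simp
    qed (simp add: rot_nth[OF assms])
  qed
  then show ?thesis by (simp add: vec_eq_iff)
qed

lemma rot_uminus_rot:
  fixes x :: "(real,'n::{finite,linorder}) vec"
  assumes "CARD('n) \<ge> 2"
  shows "rot (- \<theta>) (rot \<theta> x) = x"
  by (simp add: rot_rot[OF assms])

lemma norm_rot:
  fixes x :: "(real,'n::{finite,linorder}) vec"
  assumes "CARD('n) \<ge> 2"
  shows "norm (rot \<theta> x) = norm x"
proof -
  have ne: "(idx1::'n) \<noteq> idx2" by (rule idx1_neq_idx2[OF assms])
  have plane: "(p * c - q * s)\<^sup>2 + (p * s + q * c)\<^sup>2 = (p\<^sup>2 + q\<^sup>2) * (s\<^sup>2 + c\<^sup>2)"
    for p q c s :: real
    by algebra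
  have rest: "(\<Sum>i\<in>UNIV - {idx1, idx2}. (rot \<theta> x $ i)\<^sup>2) = (\<Sum>i\<in>UNIV - {idx1, idx2}. (x $ i)\<^sup>2)"
    by (intro sum.cong) (auto simp: rot_nth[OF assms])
  have "norm (rot \<theta> x) ^ 2 = norm x ^ 2"
    unfolding power2_norm_vec_split[OF ne, of "rot \<theta> x"] power2_norm_vec_split[OF ne, of x]
      rest rot_nth(1,2)[OF assms] plane by simp
  then show ?thesis by (simp add: power2_eq_iff_nonneg)
qed

lemma cos_sin_chord_le:
  fixes \<alpha> \<beta> :: real
  shows "(cos \<beta> - cos \<alpha>)\<^sup>2 + (sin \<beta> - sin \<alpha>)\<^sup>2 \<le> (\<beta> - \<alpha>)\<^sup>2"
proof -
  have "(cos \<beta> - cos \<alpha>)\<^sup>2 + (sin \<beta> - sin \<alpha>)\<^sup>2 = 2 - 2 * cos (\<beta> - \<alpha>)"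
    by (simp add: power2_eq_square cos_diff algebra_simps)
  also have "\<dots> = 4 * (sin ((\<beta> - \<alpha>) / 2))\<^sup>2"
  proof -
    have half: "2 * ((\<beta> - \<alpha>) / 2) = \<beta> - \<alpha>" by simp
    show ?thesis using cos_double_sin[of "(\<beta> - \<alpha>) / 2", unfolded half] by simp
  qed
  also have "\<dots> \<le> 4 * ((\<beta> - \<alpha>) / 2)\<^sup>2"
    using abs_sin_x_le_abs_x[of "(\<beta> - \<alpha>) / 2"] by (simp add: abs_le_square_iff[symmetric])
  also have "\<dots> = (\<beta> - \<alpha>)\<^sup>2"
    by (simp add: power_divide)
  finally show ?thesis .
qed

lemma norm_rot_diff_le:
  fixes y :: "(real,'n::{finite,linorder}) vec"
  assumes "CARD('n) \<ge> 2"
  shows "norm (rot \<beta> y - rot \<alpha> y) \<le> \<bar>\<beta> - \<alpha>\<bar> * norm y"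
proof -
  have ne: "(idx1::'n) \<noteq> idx2" by (rule idx1_neq_idx2[OF assms])
  let ?p = "(y $ idx1)\<^sup>2 + (y $ idx2)\<^sup>2"
  have plane: "(p * c2 - q * s2 - (p * c1 - q * s1))\<^sup>2 + (p * s2 + q * c2 - (p * s1 + q * c1))\<^sup>2
      = (p\<^sup>2 + q\<^sup>2) * ((c2 - c1)\<^sup>2 + (s2 - s1)\<^sup>2)" for p q c2 s2 c1 s1 :: real
    by algebra
  have rest: "(\<Sum>i\<in>UNIV - {idx1, idx2}. (rot \<beta> y $ i - rot \<alpha> y $ i)\<^sup>2) = 0"
    by (rule sum.neutral) (simp add: rot_nth[OF assms])
  have "norm (rot \<beta> y - rot \<alpha> y) ^ 2 = ?p * ((cos \<beta> - cos \<alpha>)\<^sup>2 + (sin \<beta> - sin \<alpha>)\<^sup>2)"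
    unfolding power2_norm_vec_split[OF ne, of "rot \<beta> y - rot \<alpha> y"] vector_minus_component
      rest rot_nth(1,2)[OF assms] plane by simp
  also have "\<dots> \<le> ?p * (\<beta> - \<alpha>)\<^sup>2"
    by (intro mult_left_mono cos_sin_chord_le) auto
  also have "\<dots> \<le> norm y ^ 2 * (\<beta> - \<alpha>)\<^sup>2"
    unfolding power2_norm_vec_split[OF ne, of y] by (intro mult_right_mono) (auto simp: sum_nonneg)
  also have "\<dots> = (\<bar>\<beta> - \<alpha>\<bar> * norm y)\<^sup>2"
    by (simp add: power_mult_distrib)
  finally show ?thesis by (rule power2_le_imp_le) auto
qed

lemma lipschitz_on_Lip:
  assumes "\<exists>C. C-lipschitz_on S f"
  shows "(Lip S f)-lipschitz_on S f"
proof -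
  let ?A = "{C. C-lipschitz_on S f}"
  have ne: "?A \<noteq> {}" using assms by auto
  show ?thesis unfolding Lip_def
  proof (rule lipschitz_onI)
    show "0 \<le> Inf ?A" using ne by (intro cInf_greatest) (auto simp: lipschitz_on_def)
    fix x y assume xy: "x \<in> S" "y \<in> S"
    show "dist (f x) (f y) \<le> Inf ?A * dist x y"
    proof (cases "x = y")
      case False
      have "dist (f x) (f y) / dist x y \<le> Inf ?A"
      proof (rule cInf_greatest[OF ne])
        fix C assume "C \<in> ?A"
        then have "dist (f x) (f y) \<le> C * dist x y" using xy by (simp add: lipschitz_onD)
        with False show "dist (f x) (f y) / dist x y \<le> C" by (simp add: divide_le_eq)
      qed
      with False show ?thesis by (simp add: divide_le_eq)
    qed simp
  qed
qed

lemma bilipschitz_if_left_inverse: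
  assumes "\<And>x. g (f x) = x" and "L-lipschitz_on UNIV f" and "L-lipschitz_on UNIV g"
  shows "bilipschitz L f"
proof -
  have "inj f" by (metis assms(1) injI)
  moreover have "L-lipschitz_on (range f) (inv f)"
  proof -
    have "L-lipschitz_on (range f) g"
      using assms(3) by (rule lipschitz_on_subset) simp
    moreover have "inv f y = g y" if "y \<in> range f" for y
      using that assms(1) \<open>inj f\<close> by auto
    ultimately show ?thesis by simp
  qed
  ultimately show ?thesis
    using assms(2) unfolding bilipschitz_def by blast
qed

definition radial_rot :: "(real \<Rightarrow> real) \<Rightarrow> (real,'n::{finite,linorder}) vec \<Rightarrow> (real,'n) vec" where
  "radial_rot g x = rot (g (norm x)) x"

lemma radial_rot_uminus_radial_rot:
  fixes x :: "(real,'n::{finite,linorder}) vec"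
  assumes "CARD('n) \<ge> 2"
  shows "radial_rot (\<lambda>t. - g t) (radial_rot g x) = x"
  by (simp add: radial_rot_def norm_rot[OF assms] rot_uminus_rot[OF assms])

lemma dist_radial_rot_le:
  fixes x y :: "(real,'n::{finite,linorder}) vec"
  assumes "CARD('n) \<ge> 2"
    and "t0 \<ge> 0" and "L-lipschitz_on {0..} g" and "\<And>t. t \<ge> t0 \<Longrightarrow> g t = 0"
    and "norm y \<le> norm x"
  shows "dist (radial_rot g x) (radial_rot g y) \<le> (L * t0 + 1) * dist x y"
proof -
  let ?a = "g (norm x)" and ?b = "g (norm y)"
  have L: "L \<ge> 0" using assms(3) by (simp add: lipschitz_on_def)
  have angle: "\<bar>?a - ?b\<bar> * norm y \<le> L * t0 * norm (x - y)"
  proof (cases "norm y \<ge> t0")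
    case True
    then show ?thesis using assms(2,4,5) L by simp
  next
    case False
    have "\<bar>?a - ?b\<bar> \<le> L * dist (norm x) (norm y)"
      using assms(3) lipschitz_onD[of L "{0..}" g "norm x" "norm y"] by (simp add: dist_real_def)
    also have "\<dots> \<le> L * norm (x - y)"
      using L norm_triangle_ineq3[of x y] by (intro mult_left_mono) (auto simp: dist_real_def)
    finally have "\<bar>?a - ?b\<bar> * norm y \<le> L * norm (x - y) * t0"
      using False by (intro mult_mono) auto
    then show ?thesis by (simp add: algebra_simps)
  qed
  have "dist (radial_rot g x) (radial_rot g y) \<le> norm (rot ?a x - rot ?a y) + norm (rot ?a y - rot ?b y)"
    unfolding radial_rot_def dist_norm by (rule norm_diff_triangle_le[OF order_refl order_refl])
  also have "\<dots> \<le> norm (x - y) + \<bar>?a - ?b\<bar> * norm y"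
    by (simp add: rot_diff norm_rot[OF assms(1)] norm_rot_diff_le[OF assms(1)] abs_minus_commute)
  finally show ?thesis
    using angle by (simp add: dist_norm algebra_simps)
qed

lemma radial_rot_lipschitz:
  assumes "CARD('n::{finite,linorder}) \<ge> 2"
    and "t0 \<ge> 0" and "L-lipschitz_on {0..} g" and "\<And>t. t \<ge> t0 \<Longrightarrow> g t = 0"
  shows "(L * t0 + 1)-lipschitz_on UNIV (radial_rot g :: (real,'n) vec \<Rightarrow> _)"
proof (rule lipschitz_onI)
  show "0 \<le> L * t0 + 1"
    using assms(2,3) by (simp add: lipschitz_on_def)
  show "dist (radial_rot g x) (radial_rot g y) \<le> (L * t0 + 1) * dist x y" for x y :: "(real,'n) vec"
    using dist_radial_rot_le[OF assms, of x y] dist_radial_rot_le[OF assms, of y x]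
    by (cases "norm y \<le> norm x") (simp_all add: dist_commute)
qed

theorem lemma3p2:
  fixes \<psi> :: "real \<Rightarrow> real" and t0 :: real
  assumes "CARD('n) \<ge> 2"
  shows "(\<forall>\<theta>1 \<theta>2 (y::(real,'n::{finite,linorder}) vec). norm (rot \<theta>2 y - rot \<theta>1 y) \<le> \<bar>\<theta>2 - \<theta>1\<bar> * norm y)
    \<and> ((t0 > 0 \<and> (\<exists>C. C-lipschitz_on {0..} \<psi>) \<and> (\<forall>t\<ge>t0. \<psi> t = 0)) \<longrightarrow>
        (let \<Phi> = (\<lambda>x::(real,'n) vec. rot (\<psi> (norm x)) x) in
          bilipschitz (Lip {0..} \<psi> * t0 + 1) \<Phi> \<and> (\<forall>x. x \<notin> ball 0 t0 \<longrightarrow> \<Phi> x = x)))"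
proof (intro conjI allI impI)
  show "norm (rot \<theta>2 y - rot \<theta>1 y) \<le> \<bar>\<theta>2 - \<theta>1\<bar> * norm y" for \<theta>1 \<theta>2 and y :: "(real,'n) vec"
    by (rule norm_rot_diff_le[OF assms])
next
  assume "t0 > 0 \<and> (\<exists>C. C-lipschitz_on {0..} \<psi>) \<and> (\<forall>t\<ge>t0. \<psi> t = 0)"
  then have t0: "t0 \<ge> 0" and vanish: "\<And>t. t \<ge> t0 \<Longrightarrow> \<psi> t = 0"
    and lip: "(Lip {0..} \<psi>)-lipschitz_on {0..} \<psi>"
    using lipschitz_on_Lip by auto
  have lip_uminus: "(Lip {0..} \<psi>)-lipschitz_on {0..} (\<lambda>t. - \<psi> t)"
    using lip by (simp add: lipschitz_on_def dist_minus)
  have "bilipschitz (Lip {0..} \<psi> * t0 + 1) (radial_rot \<psi> :: (real,'n) vec \<Rightarrow> _)"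
  proof (rule bilipschitz_if_left_inverse)
    show "radial_rot (\<lambda>t. - \<psi> t) (radial_rot \<psi> x) = x" for x :: "(real,'n) vec"
      by (rule radial_rot_uminus_radial_rot[OF assms])
  qed (use radial_rot_lipschitz[OF assms t0] lip lip_uminus vanish in auto)
  moreover have "radial_rot \<psi> x = x" if "x \<notin> ball 0 t0" for x :: "(real,'n) vec"
    using that vanish by (simp add: radial_rot_def)
  ultimately show "let \<Phi> = (\<lambda>x::(real,'n) vec. rot (\<psi> (norm x)) x) in
      bilipschitz (Lip {0..} \<psi> * t0 + 1) \<Phi> \<and> (\<forall>x. x \<notin> ball 0 t0 \<longrightarrow> \<Phi> x = x)"
    by (simp add: radial_rot_def[abs_def])
qed

end
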